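(* For every $\theta\in\mathbb R$ there exists a unique $\tau^\star=\tau^\star(\theta)\in(-x_u,x_q)$ such that $s_1(\theta,\tau^\star)=s_2(\theta,\tau^\star)$. (The paper calls $\tau^\star$ the equalizing prejudice and $s(\tau^\star):=s_1(\theta,\tau^\star)=s_2(\theta,\tau^\star)$ the equalized score.)
   Context: Setup. Let $Q\in\{0,1\}$ be a random variable with $\mathbb P(Q=1)=\pi\in(0,1)$, and let $(\Theta,\Gamma)$ be a real-valued random vector whose conditional joint density given $Q=1$ is $h_q(\theta,\gamma)$ and given $Q=0$ is $h_u(\theta,\gamma)$, both strictly positive on $\mathbb R^2$ (so $\Theta,\Gamma$ are continuous random variables and the conditional law of $\Gamma$ given $\Theta=\theta$, also given $Q$, has full support). Monotone likelihood ratio assumption: $l(\theta,\gamma)=h_q(\theta,\gamma)/h_u(\theta,\gamma)$ is continuous and strictly increasing in each of $\theta$ and $\gamma$, and for each $\theta$ the map $\gamma\mapsto l(\theta,\gamma)$ has infimum $0$ and supremum $+\infty$. Fix payoffs $x_q>0$, $x_u>0$. For a prejudice level $\tau\in(-x_u,x_q)$ let $A(\tau)=\mathbb 1\{l(\Theta,\Gamma)>\frac{(1-\pi)(x_u+\tau)}{\pi(x_q-\tau)}\}$ (equivalently, with $\kappa(\theta,\gamma)=\mathbb P(Q=1\mid\Theta=\theta,\Gamma=\gamma)$, accept iff $\kappa x_q-(1-\kappa)x_u>\tau$). Define the scores $s_1(\theta,\tau)=\mathbb E[Q\mid\Theta=\theta,A(\tau)=1]$ and $s_2(\theta,\tau)=\mathbb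 E[A(\tau)\mid\Theta=\theta]=\mathbb P(A(\tau)=1\mid\Theta=\theta)$. Write $\phi(\theta)=\mathbb P(Q=1\mid\Theta=\theta)$. *)

theory Defs
  imports "HOL-Analysis.Analysis"
begin

definition lr :: "(real \<Rightarrow> real \<Rightarrow> real) \<Rightarrow> (real \<Rightarrow> real \<Rightarrow> real) \<Rightarrow> real \<Rightarrow> real \<Rightarrow> real" where
  "lr hq hu t g = hq t g / hu t g"

definition acc_thr :: "real \<Rightarrow> real \<Rightarrow> real \<Rightarrow> real \<Rightarrow> real" where
  "acc_thr p xq xu tau = ((1 - p) * (xu + tau)) / (p * (xq - tau))"

definition acc_set :: "(real \<Rightarrow> real \<Rightarrow> real) \<Rightarrow> (real \<Rightarrow> real \<Rightarrow> real) \<Rightarrow> real \<Rightarrow> real \<Rightarrow> real \<Rightarrow> real \<Rightarrow> real \<Rightarrow> real set" where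
  "acc_set hq hu p xq xu t tau = {g. acc_thr p xq xu tau < lr hq hu t g}"

definition acc_mass :: "(real \<Rightarrow> real \<Rightarrow> real) \<Rightarrow> (real \<Rightarrow> real \<Rightarrow> real) \<Rightarrow> (real \<Rightarrow> real \<Rightarrow> real) \<Rightarrow> real \<Rightarrow> real \<Rightarrow> real \<Rightarrow> real \<Rightarrow> real \<Rightarrow> real" where
  "acc_mass h hq hu p xq xu t tau =
     (\<integral>g. h t g * indicator (acc_set hq hu p xq xu t tau) g \<partial>lborel)"

text \<open>s1(theta,tau) = E[Q | Theta = theta, A(tau) = 1], via Bayes' rule with the densities.\<close>
definition score1 :: "real \<Rightarrow> (real \<Rightarrow> real \<Rightarrow> real) \<Rightarrow> (real \<Rightarrow> real \<Rightarrow> real) \<Rightarrow> real \<Rightarrow> real \<Rightarrow> real \<Rightarrow> real \<Rightarrow> real" where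
  "score1 p hq hu xq xu t tau =
     p * acc_mass hq hq hu p xq xu t tau /
     (p * acc_mass hq hq hu p xq xu t tau + (1 - p) * acc_mass hu hq hu p xq xu t tau)"

text \<open>s2(theta,tau) = P(A(tau) = 1 | Theta = theta), via the densities.\<close>
definition score2 :: "real \<Rightarrow> (real \<Rightarrow> real \<Rightarrow> real) \<Rightarrow> (real \<Rightarrow> real \<Rightarrow> real) \<Rightarrow> real \<Rightarrow> real \<Rightarrow> real \<Rightarrow> real \<Rightarrow> real" where
  "score2 p hq hu xq xu t tau =
     (p * acc_mass hq hq hu p xq xu t tau + (1 - p) * acc_mass hu hq hu p xq xu t tau) /
     (p * (\<integral>g. hq t g \<partial>lborel) + (1 - p) * (\<integral>g. hu t g \<partial>lborel))"

end

theory Submission imports Defs begin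

text \<open>
For fixed \<open>\<theta>\<close> the likelihood ratio is strictly increasing in \<open>\<gamma>\<close> and onto \<open>(0,\<infinity>)\<close>, so every
prejudice \<open>\<tau>\<close> corresponds to exactly one cutoff \<open>c\<close> with acceptance region \<open>\<gamma> > c\<close>, and
\<open>\<tau> \<mapsto> c\<close> is a bijection of \<open>(-x\<^sub>u, x\<^sub>q)\<close> onto \<open>\<real>\<close>. In terms of the cutoff, \<open>s\<^sub>2\<close> is the
acceptance rate, which is continuous and strictly decreasing from 1 to 0, while \<open>s\<^sub>1\<close> is the
precision among the accepted, which is nondecreasing by the monotone likelihood ratio
property and bounded away from 0 and 1 at the ends. Hence \<open>s\<^sub>2 - s\<^sub>1\<close> has exactly one zero.
\<close>

definition tail_integral :: "(real \<Rightarrow> real) \<Rightarrow> real \<Rightarrow> real" where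
  "tail_integral a c = (\<integral>x. a x * indicator {c<..} x \<partial>lborel)"

lemma integrable_mult_indicator_Ioi:
  fixes a :: "real \<Rightarrow> real"
  assumes "integrable lborel a"
  shows "integrable lborel (\<lambda>x. a x * indicator {c<..} x)"
  using assms by (rule integrable_real_mult_indicator[rotated]) simp

lemma continuous_on_tail_integral:
  fixes a :: "real \<Rightarrow> real"
  assumes a: "integrable lborel a"
  shows "continuous_on UNIV (tail_integral a)"
proof (rule continuous_on_sequentiallyI)
  fix u and c :: real assume u: "u \<longlonglongrightarrow> c"
  show "(\<lambda>n. tail_integral a (u n)) \<longlonglongrightarrow> tail_integral a c" unfolding tail_integral_def
  proof (rule integral_dominated_convergence[where w="\<lambda>x. \<bar>a x\<bar>"])
    show "AE x in lborel. (\<lambda>n. a x * indicator {u n<..} x) \<longlonglongrightarrow> a x * indicator {c<..} x"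
      using AE_lborel_singleton[of c]
    proof eventually_elim
      fix x :: real assume "x \<noteq> c"
      have "eventually (\<lambda>n. a x * indicator {u n<..} x = a x * indicator {c<..} x) sequentially"
      proof (cases "x < c")
        case True
        show ?thesis using order_tendstoD(1)[OF u True]
          by (rule eventually_mono) (use True in \<open>auto split: split_indicator\<close>)
      next
        case False
        then have "c < x" using \<open>x \<noteq> c\<close> by simp
        show ?thesis using order_tendstoD(2)[OF u \<open>c < x\<close>]
          by (rule eventually_mono) (use \<open>c < x\<close> in \<open>auto split: split_indicator\<close>)
      qed
      then show "(\<lambda>n. a x * indicator {u n<..} x) \<longlonglongrightarrow> a x * indicator {c<..} x"
        by (rule tendsto_eventually)
    qed
  qed (use a in \<open>auto split: split_indicator\<close>)
qed

lemma tail_integral_at_top: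
  fixes a :: "real \<Rightarrow> real"
  assumes a: "integrable lborel a"
  shows "(tail_integral a \<longlongrightarrow> 0) at_top"
proof -
  have "((\<lambda>c. \<integral>x. a x * indicator {c<..} x \<partial>lborel) \<longlongrightarrow> integral\<^sup>L (lborel :: real measure) (\<lambda>_. 0)) at_top"
  proof (rule integral_dominated_convergence_at_top[where w="\<lambda>x. \<bar>a x\<bar>"])
    show "AE x in lborel. ((\<lambda>c. a x * indicator {c<..} x) \<longlongrightarrow> 0) at_top"
    proof (rule AE_I2, rule tendsto_eventually)
      show "\<forall>\<^sub>F c in at_top. a x * indicator {c<..} x = 0" for x :: real
        using eventually_ge_at_top[of x] by eventually_elim auto
    qed
  qed (use a in \<open>auto split: split_indicator\<close>)
  then show ?thesis unfolding tail_integral_def[abs_def] by simp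
qed

lemma tail_integral_at_bot:
  fixes a :: "real \<Rightarrow> real"
  assumes a: "integrable lborel a"
  shows "(tail_integral a \<longlongrightarrow> (\<integral>x. a x \<partial>lborel)) at_bot"
proof -
  have "((\<lambda>c. \<integral>x. a x * indicator {-c<..} x \<partial>lborel) \<longlongrightarrow> (\<integral>x. a x \<partial>lborel)) at_top"
  proof (rule integral_dominated_convergence_at_top[where w="\<lambda>x. \<bar>a x\<bar>"])
    show "AE x in lborel. ((\<lambda>c. a x * indicator {-c<..} x) \<longlongrightarrow> a x) at_top"
    proof (rule AE_I2, rule tendsto_eventually)
      show "\<forall>\<^sub>F c in at_top. a x * indicator {-c<..} x = a x" for x :: real
        using eventually_gt_at_top[of "-x"] by eventually_elim auto
    qed
  qed (use a in \<open>auto split: split_indicator\<close>)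
  then show ?thesis unfolding tail_integral_def[abs_def] filterlim_at_bot_mirror by simp
qed

lemma tail_integral_diff:
  fixes a :: "real \<Rightarrow> real"
  assumes a: "integrable lborel a" and "c1 \<le> c2"
  shows "tail_integral a c1 - tail_integral a c2 = (\<integral>x. a x * indicator {c1<..c2} x \<partial>lborel)"
proof -
  have "tail_integral a c1 - tail_integral a c2 =
      (\<integral>x. a x * indicator {c1<..} x - a x * indicator {c2<..} x \<partial>lborel)"
    unfolding tail_integral_def
    by (rule Bochner_Integration.integral_diff[symmetric])
      (use integrable_mult_indicator_Ioi[OF a] in auto)
  also have "\<dots> = (\<integral>x. a x * indicator {c1<..c2} x \<partial>lborel)"
    by (rule Bochner_Integration.integral_cong) (use assms(2) in \<open>auto split: split_indicator\<close>)
  finally show ?thesis .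
qed

lemma integral_mult_indicator_Ioc_pos:
  fixes a :: "real \<Rightarrow> real"
  assumes a: "integrable lborel a" and pos: "\<And>x. 0 < a x" and "c1 < c2"
  shows "0 < (\<integral>x. a x * indicator {c1<..c2} x \<partial>lborel)"
proof -
  have int: "integrable lborel (\<lambda>x. a x * indicator {c1<..c2} x)"
    using a by (rule integrable_real_mult_indicator[rotated]) simp
  have nonneg: "AE x in lborel. 0 \<le> a x * indicator {c1<..c2} x"
    using pos by (auto intro!: AE_I2 simp: less_imp_le split: split_indicator)
  have "(AE x in lborel. a x * indicator {c1<..c2} x = 0) \<longleftrightarrow> emeasure lborel {c1<..c2} = 0"
    by (rule AE_iff_measurable) (use pos in \<open>auto split: split_indicator simp: less_imp_neq[symmetric]\<close>)
  then have "(\<integral>x. a x * indicator {c1<..c2} x \<partial>lborel) \<noteq> 0"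
    using integral_nonneg_eq_0_iff_AE[OF int nonneg] \<open>c1 < c2\<close> by simp
  moreover have "0 \<le> (\<integral>x. a x * indicator {c1<..c2} x \<partial>lborel)"
    using nonneg by (rule integral_nonneg_AE)
  ultimately show ?thesis by simp
qed

lemma tail_integral_nonneg:
  fixes a :: "real \<Rightarrow> real"
  assumes "\<And>x. 0 \<le> a x"
  shows "0 \<le> tail_integral a c"
  unfolding tail_integral_def
  by (rule integral_nonneg_AE) (use assms in \<open>auto intro!: AE_I2 split: split_indicator\<close>)

lemma tail_integral_strict_antimono:
  fixes a :: "real \<Rightarrow> real"
  assumes a: "integrable lborel a" and pos: "\<And>x. 0 < a x" and "c1 < c2"
  shows "tail_integral a c2 < tail_integral a c1"
  using tail_integral_diff[OF a, of c1 c2] integral_mult_indicator_Ioc_pos[OF a pos \<open>c1 < c2\<close>]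
    \<open>c1 < c2\<close> by simp

lemma tail_integral_pos:
  fixes a :: "real \<Rightarrow> real"
  assumes a: "integrable lborel a" and pos: "\<And>x. 0 < a x"
  shows "0 < tail_integral a c"
proof -
  have "0 \<le> tail_integral a (c + 1)"
    using pos by (intro tail_integral_nonneg less_imp_le)
  then show ?thesis
    using tail_integral_strict_antimono[OF a pos, of c "c + 1"] by simp
qed

lemma tail_integral_le_integral:
  fixes a :: "real \<Rightarrow> real"
  assumes a: "integrable lborel a" and "\<And>x. 0 \<le> a x"
  shows "tail_integral a c \<le> (\<integral>x. a x \<partial>lborel)"
  unfolding tail_integral_def
  by (rule integral_mono)
    (use a integrable_mult_indicator_Ioi[OF a] assms(2) in \<open>auto split: split_indicator\<close>)

lemma ex1_zero_if_strictly_decreasing: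
  fixes F :: "real \<Rightarrow> real"
  assumes cont: "continuous_on UNIV F" and dec: "\<And>x y. x < y \<Longrightarrow> F y < F x"
    and pos: "0 < F x0" and neg: "F x1 < 0"
  shows "\<exists>!x. F x = 0"
proof -
  have "x0 \<le> x1"
    using dec[of x1 x0] pos neg by (cases "x0 \<le> x1") auto
  then obtain x where "F x = 0"
    using IVT2'[of F x1 0 x0] continuous_on_subset[OF cont] pos neg by force
  moreover have "y = x" if "F y = 0" for y
    using dec[of x y] dec[of y x] \<open>F x = 0\<close> that by (cases x y rule: linorder_cases) auto
  ultimately show ?thesis by blast
qed

locale monotone_likelihood_ratio =
  fixes p :: real and a b :: "real \<Rightarrow> real"
  assumes p_pos: "0 < p" and p_less_1: "p < 1"
    and integrable_a: "integrable lborel a" and integrable_b: "integrable lborel b"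
    and a_pos: "\<And>x. 0 < a x" and b_pos: "\<And>x. 0 < b x"
    and ratio_mono: "mono (\<lambda>x. a x / b x)"
begin

lemma tail_integral_ratio_mono:
  assumes "c1 \<le> c2"
  shows "tail_integral b c2 * tail_integral a c1 \<le> tail_integral b c1 * tail_integral a c2"
proof -
  define L where "L = a c2 / b c2"
  define A where "A = (\<integral>x. a x * indicator {c1<..c2} x \<partial>lborel)"
  define B where "B = (\<integral>x. b x * indicator {c1<..c2} x \<partial>lborel)"
  have a_le: "a x \<le> L * b x" if "x \<le> c2" for x
    using monoD[OF ratio_mono that] b_pos[of x] by (simp add: L_def divide_le_eq)
  have a_ge: "L * b x \<le> a x" if "c2 \<le> x" for x
    using monoD[OF ratio_mono that] b_pos[of x] by (simp add: L_def le_divide_eq)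
  have Ioc_integrable: "integrable lborel (\<lambda>x. f x * indicator {c1<..c2} x)"
    if "integrable lborel f" for f :: "real \<Rightarrow> real"
    using that by (rule integrable_real_mult_indicator[rotated]) simp
  have "A \<le> (\<integral>x. L * (b x * indicator {c1<..c2} x) \<partial>lborel)"
    unfolding A_def using Ioc_integrable[OF integrable_a] Ioc_integrable[OF integrable_b] a_le
    by (intro integral_mono) (auto split: split_indicator)
  then have A_le: "A \<le> L * B"
    by (simp add: B_def)
  have "L * tail_integral b c2 = (\<integral>x. L * (b x * indicator {c2<..} x) \<partial>lborel)"
    by (simp add: tail_integral_def)
  also have "\<dots> \<le> tail_integral a c2"
    unfolding tail_integral_def
    using integrable_mult_indicator_Ioi[OF integrable_a] integrable_mult_indicator_Ioi[OF integrable_b] a_ge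
    by (intro integral_mono) (auto split: split_indicator)
  finally have tail_ge: "L * tail_integral b c2 \<le> tail_integral a c2" .
  have B_nonneg: "0 \<le> B"
    unfolding B_def using b_pos
    by (intro integral_nonneg_AE AE_I2) (auto simp: less_imp_le split: split_indicator)
  have tail_b_nonneg: "0 \<le> tail_integral b c2"
    using b_pos by (intro tail_integral_nonneg less_imp_le)
  have "tail_integral b c2 * A \<le> B * (L * tail_integral b c2)"
    using mult_left_mono[OF A_le tail_b_nonneg] by (simp add: ac_simps)
  also have "\<dots> \<le> B * tail_integral a c2"
    using tail_ge B_nonneg by (rule mult_left_mono)
  finally have "tail_integral b c2 * A \<le> B * tail_integral a c2" .
  moreover have "tail_integral a c1 = tail_integral a c2 + A" "tail_integral b c1 = tail_integral b c2 + B"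
    using tail_integral_diff[OF integrable_a assms] tail_integral_diff[OF integrable_b assms]
    by (simp_all add: A_def B_def)
  ultimately show ?thesis by (simp add: algebra_simps)
qed

definition accepted_mass :: "real \<Rightarrow> real" where
  "accepted_mass c = p * tail_integral a c + (1 - p) * tail_integral b c"

definition total_mass :: real where
  "total_mass = p * (\<integral>x. a x \<partial>lborel) + (1 - p) * (\<integral>x. b x \<partial>lborel)"

definition acceptance_rate :: "real \<Rightarrow> real" where
  "acceptance_rate c = accepted_mass c / total_mass"

definition acceptance_precision :: "real \<Rightarrow> real" where
  "acceptance_precision c = p * tail_integral a c / accepted_mass c"

lemma tail_integral_a_pos: "0 < tail_integral a c"
  using integrable_a a_pos by (rule tail_integral_pos)

lemma tail_integral_b_pos: "0 < tail_integral b c"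
  using integrable_b b_pos by (rule tail_integral_pos)

lemma accepted_mass_pos: "0 < accepted_mass c"
  unfolding accepted_mass_def using tail_integral_a_pos tail_integral_b_pos p_pos p_less_1
  by (intro add_pos_pos mult_pos_pos) auto

lemma accepted_mass_strict_antimono:
  assumes "c1 < c2"
  shows "accepted_mass c2 < accepted_mass c1"
  unfolding accepted_mass_def
  using tail_integral_strict_antimono[OF integrable_a a_pos assms]
    tail_integral_strict_antimono[OF integrable_b b_pos assms] p_pos p_less_1
  by (intro add_strict_mono mult_strict_left_mono) auto

lemma continuous_on_accepted_mass: "continuous_on UNIV accepted_mass"
  unfolding accepted_mass_def[abs_def]
  by (intro continuous_intros continuous_on_tail_integral integrable_a integrable_b)

lemma accepted_mass_at_bot: "(accepted_mass \<longlongrightarrow> total_mass) at_bot"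
  unfolding accepted_mass_def[abs_def] total_mass_def
  by (intro tendsto_intros tail_integral_at_bot integrable_a integrable_b)

lemma accepted_mass_at_top: "(accepted_mass \<longlongrightarrow> 0) at_top"
  using tail_integral_at_top[OF integrable_a] tail_integral_at_top[OF integrable_b]
  unfolding accepted_mass_def[abs_def] by (auto intro!: tendsto_eq_intros)

lemma integral_a_weighted_less_total_mass: "p * (\<integral>x. a x \<partial>lborel) < total_mass"
proof -
  have "0 < tail_integral b 0"
    by (rule tail_integral_b_pos)
  also have "\<dots> \<le> (\<integral>x. b x \<partial>lborel)"
    using integrable_b by (rule tail_integral_le_integral) (use b_pos in \<open>simp add: less_imp_le\<close>)
  finally show ?thesis
    unfolding total_mass_def using p_less_1 by simp
qed

lemma total_mass_pos: "0 < total_mass"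
proof -
  have "0 \<le> (\<integral>x. a x \<partial>lborel)"
    using a_pos by (intro integral_nonneg_AE AE_I2 less_imp_le)
  then show ?thesis
    using integral_a_weighted_less_total_mass p_pos by (smt (verit) mult_nonneg_nonneg)
qed

lemma acceptance_rate_strict_antimono:
  assumes "c1 < c2"
  shows "acceptance_rate c2 < acceptance_rate c1"
  unfolding acceptance_rate_def
  using accepted_mass_strict_antimono[OF assms] total_mass_pos by (rule divide_strict_right_mono)

lemma acceptance_precision_mono:
  assumes "c1 \<le> c2"
  shows "acceptance_precision c1 \<le> acceptance_precision c2"
proof -
  have "p * tail_integral a c1 * accepted_mass c2
      = p * p * tail_integral a c1 * tail_integral a c2 + p * (1 - p) * (tail_integral b c2 * tail_integral a c1)"
    by (simp add: accepted_mass_def algebra_simps)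
  also have "\<dots> \<le> p * p * tail_integral a c1 * tail_integral a c2 + p * (1 - p) * (tail_integral b c1 * tail_integral a c2)"
    using tail_integral_ratio_mono[OF assms] p_pos p_less_1 by (intro add_left_mono mult_left_mono) auto
  also have "\<dots> = p * tail_integral a c2 * accepted_mass c1"
    by (simp add: accepted_mass_def algebra_simps)
  finally show ?thesis
    unfolding acceptance_precision_def using accepted_mass_pos[of c1] accepted_mass_pos[of c2]
    by (simp add: divide_simps)
qed

lemma eventually_precision_less_rate_at_bot:
  "eventually (\<lambda>c. acceptance_precision c < acceptance_rate c) at_bot"
proof -
  have "((\<lambda>c. acceptance_rate c - acceptance_precision c)
      \<longlongrightarrow> total_mass / total_mass - p * (\<integral>x. a x \<partial>lborel) / total_mass) at_bot"
    unfolding acceptance_rate_def[abs_def] acceptance_precision_def[abs_def]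
    using total_mass_pos
    by (intro tendsto_intros accepted_mass_at_bot tail_integral_at_bot integrable_a) auto
  moreover have "0 < total_mass / total_mass - p * (\<integral>x. a x \<partial>lborel) / total_mass"
    using integral_a_weighted_less_total_mass total_mass_pos by (simp add: divide_strict_right_mono)
  ultimately show ?thesis
    by (rule order_tendstoD(1)[THEN eventually_mono]) simp
qed

lemma eventually_rate_less_precision_at_top:
  "eventually (\<lambda>c. acceptance_rate c < acceptance_precision c) at_top"
proof -
  have "(acceptance_rate \<longlongrightarrow> 0 / total_mass) at_top"
    unfolding acceptance_rate_def[abs_def]
    using total_mass_pos by (intro tendsto_intros accepted_mass_at_top) auto
  moreover have "0 < acceptance_precision 0"
    unfolding acceptance_precision_def using p_pos tail_integral_a_pos accepted_mass_pos by simp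
  ultimately have "eventually (\<lambda>c. acceptance_rate c < acceptance_precision 0) at_top"
    by (intro order_tendstoD(2)) auto
  then show ?thesis
    using eventually_ge_at_top[of 0]
    by eventually_elim (use acceptance_precision_mono in fastforce)
qed

lemma ex1_acceptance_precision_eq_rate: "\<exists>!c. acceptance_precision c = acceptance_rate c"
proof -
  obtain c0 where c0: "acceptance_precision c0 < acceptance_rate c0"
    using eventually_happens[OF eventually_precision_less_rate_at_bot] by auto
  obtain c1 where c1: "acceptance_rate c1 < acceptance_precision c1"
    using eventually_happens[OF eventually_rate_less_precision_at_top] by auto
  have "continuous_on UNIV (\<lambda>c. acceptance_rate c - acceptance_precision c)"
    unfolding acceptance_rate_def[abs_def] acceptance_precision_def[abs_def]
    using accepted_mass_pos total_mass_pos
    by (intro continuous_intros continuous_on_accepted_mass continuous_on_tail_integral integrable_a)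
      (auto simp: less_imp_neq[symmetric])
  moreover have "acceptance_rate y - acceptance_precision y < acceptance_rate x - acceptance_precision x"
    if "x < y" for x y
    using acceptance_rate_strict_antimono[OF that] acceptance_precision_mono[of x y] that by simp
  ultimately have "\<exists>!c. acceptance_rate c - acceptance_precision c = 0"
    using c0 c1 by (intro ex1_zero_if_strictly_decreasing[of _ c0 c1]) auto
  then show ?thesis by (metis eq_iff_diff_eq_0)
qed

end

lemma ex1_bij_betw_UNIV:
  assumes "bij_betw f A UNIV" and "\<exists>!y. P y"
  shows "\<exists>!x. x \<in> A \<and> P (f x)"
  using assms unfolding bij_betw_def inj_on_def by (metis UNIV_I imageE)

lemma bij_betw_strict_mono_Ioi:
  fixes r :: "real \<Rightarrow> real"
  assumes cont: "continuous_on UNIV r" and mono: "strict_mono r" and pos: "\<And>x. 0 < r x"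
    and inf: "(INF x. r x) = 0" and unbounded: "\<not> bdd_above (range r)"
  shows "bij_betw r UNIV {0<..}"
proof (rule bij_betwI')
  show "r x = r y \<longleftrightarrow> x = y" for x y
    using strict_mono_eq[OF mono] .
  show "r x \<in> {0<..}" for x
    using pos by simp
  show "\<exists>x\<in>UNIV. L = r x" if "L \<in> {0<..}" for L
  proof -
    have "bdd_below (range r)"
      using pos by (intro bdd_belowI2[of _ 0] less_imp_le)
    moreover have "(INF x. r x) < L"
      using that inf by simp
    ultimately obtain x0 where x0: "r x0 < L"
      using cINF_less_iff[of UNIV r L] by auto
    obtain x1 where x1: "L < r x1"
      using unbounded by (metis bdd_aboveI2 not_le)
    have "x0 \<le> x1"
      using x0 x1 strict_mono_less_eq[OF mono, of x1 x0] by (cases "x0 \<le> x1") auto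
    then show ?thesis
      using IVT'[of r x0 L x1] continuous_on_subset[OF cont] x0 x1 by force
  qed
qed

lemma bij_betw_acc_thr:
  fixes p xq xu :: real
  assumes p: "0 < p" "p < 1" and xq: "0 < xq" and xu: "0 < xu"
  shows "bij_betw (acc_thr p xq xu) {-xu<..<xq} {0<..}"
proof (rule bij_betwI')
  fix tau assume "tau \<in> {-xu<..<xq}"
  then show "acc_thr p xq xu tau \<in> {0<..}"
    unfolding acc_thr_def using p by (auto intro!: divide_pos_pos mult_pos_pos)
next
  fix t1 t2 assume t: "t1 \<in> {-xu<..<xq}" "t2 \<in> {-xu<..<xq}"
  have "acc_thr p xq xu t1 = acc_thr p xq xu t2 \<longleftrightarrow>
      (1 - p) * p * ((xu + t1) * (xq - t2)) = (1 - p) * p * ((xu + t2) * (xq - t1))"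
    unfolding acc_thr_def using p t by (simp add: divide_simps algebra_simps)
  also have "\<dots> \<longleftrightarrow> (xu + xq) * (t1 - t2) = 0"
  proof -
    have "(xu + t1) * (xq - t2) - (xu + t2) * (xq - t1) = (xu + xq) * (t1 - t2)"
      by (simp add: algebra_simps)
    then show ?thesis
      using p by (simp flip: right_minus_eq[of "(xu + t1) * (xq - t2)"])
  qed
  also have "\<dots> \<longleftrightarrow> t1 = t2"
    using xq xu by simp
  finally show "acc_thr p xq xu t1 = acc_thr p xq xu t2 \<longleftrightarrow> t1 = t2" .
next
  fix L :: real assume "L \<in> {0<..}"
  then have L: "0 < L" by simp
  define tau where "tau = (L * p * xq - (1 - p) * xu) / ((1 - p) + L * p)"
  have d: "0 < (1 - p) + L * p"
    using p L by (simp add: add_pos_pos)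
  have xu_tau: "xu + tau = L * p * (xq + xu) / ((1 - p) + L * p)"
    unfolding tau_def using d by (simp add: field_simps)
  have xq_tau: "xq - tau = (1 - p) * (xq + xu) / ((1 - p) + L * p)"
    unfolding tau_def using d by (simp add: field_simps)
  have "0 < xu + tau" "0 < xq - tau"
    unfolding xu_tau xq_tau using d p L xq xu by (auto intro!: divide_pos_pos mult_pos_pos)
  then have "-xu < tau" "tau < xq"
    by simp_all
  moreover have "L = acc_thr p xq xu tau"
    unfolding acc_thr_def xu_tau xq_tau using d p xq xu by simp
  ultimately show "\<exists>tau\<in>{-xu<..<xq}. L = acc_thr p xq xu tau" by auto
qed

lemma acc_set_eq_Ioi:
  assumes "strict_mono (lr hq hu t)" and "lr hq hu t c = acc_thr p xq xu tau"
  shows "acc_set hq hu p xq xu t tau = {c<..}"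
  unfolding acc_set_def assms(2)[symmetric] using strict_mono_less[OF assms(1)] by auto

theorem mainTheorem1:
  fixes p xq xu :: real and hq hu :: "real \<Rightarrow> real \<Rightarrow> real"
  assumes p: "0 < p" "p < 1"
    and xq: "0 < xq" and xu: "0 < xu"
    and hq_pos: "\<And>t g. 0 < hq t g" and hu_pos: "\<And>t g. 0 < hu t g"
    and hq_meas: "(\<lambda>z. hq (fst z) (snd z)) \<in> borel_measurable (lborel \<Otimes>\<^sub>M lborel)"
    and hu_meas: "(\<lambda>z. hu (fst z) (snd z)) \<in> borel_measurable (lborel \<Otimes>\<^sub>M lborel)"
    and hq_dens: "(\<integral>z. hq (fst z) (snd z) \<partial>(lborel \<Otimes>\<^sub>M lborel)) = 1"
    and hu_dens: "(\<integral>z. hu (fst z) (snd z) \<partial>(lborel \<Otimes>\<^sub>M lborel)) = 1"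
    and hq_int2: "integrable (lborel \<Otimes>\<^sub>M lborel) (\<lambda>z. hq (fst z) (snd z))"
    and hu_int2: "integrable (lborel \<Otimes>\<^sub>M lborel) (\<lambda>z. hu (fst z) (snd z))"
    and hq_sec: "\<And>t. integrable lborel (hq t)"
    and hu_sec: "\<And>t. integrable lborel (hu t)"
    and l_cont: "continuous_on UNIV (\<lambda>z. lr hq hu (fst z) (snd z))"
    and l_mono1: "\<And>g. strict_mono (\<lambda>t. lr hq hu t g)"
    and l_mono2: "\<And>t. strict_mono (lr hq hu t)"
    and l_inf: "\<And>t. (INF g. lr hq hu t g) = 0"
    and l_sup: "\<And>t. \<not> bdd_above (range (lr hq hu t))"
  shows "\<forall>t. \<exists>!tau. -xu < tau \<and> tau < xq \<and>
            score1 p hq hu xq xu t tau = score2 p hq hu xq xu t tau"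
proof
  fix t
  interpret monotone_likelihood_ratio p "hq t" "hu t"
    using p hq_sec hu_sec hq_pos hu_pos strict_mono_mono[OF l_mono2[of t]]
    by unfold_locales (simp_all add: lr_def[abs_def])
  have "continuous_on UNIV ((\<lambda>z. lr hq hu (fst z) (snd z)) \<circ> Pair t)"
    by (intro continuous_on_compose continuous_intros continuous_on_subset[OF l_cont]) simp
  then have "bij_betw (lr hq hu t) UNIV {0<..}"
    using l_mono2 l_inf l_sup hq_pos hu_pos
    by (intro bij_betw_strict_mono_Ioi) (simp_all add: o_def lr_def)
  note lr_bij = this bij_betw_inv_into[OF this]
  define cutoff where "cutoff = inv_into UNIV (lr hq hu t) \<circ> acc_thr p xq xu"
  have cutoff_bij: "bij_betw cutoff {-xu<..<xq} UNIV"
    unfolding cutoff_def using bij_betw_acc_thr[OF p xq xu] lr_bij(2) by (rule bij_betw_trans)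
  have "acc_set hq hu p xq xu t tau = {cutoff tau<..}" if "tau \<in> {-xu<..<xq}" for tau
    using bij_betw_inv_into_right[OF lr_bij(1)] bij_betw_apply[OF bij_betw_acc_thr[OF p xq xu] that]
    by (intro acc_set_eq_Ioi l_mono2) (simp add: cutoff_def)
  then have "score1 p hq hu xq xu t tau = score2 p hq hu xq xu t tau \<longleftrightarrow>
      acceptance_precision (cutoff tau) = acceptance_rate (cutoff tau)" if "tau \<in> {-xu<..<xq}" for tau
    using that unfolding score1_def score2_def acc_mass_def acceptance_precision_def
      acceptance_rate_def accepted_mass_def total_mass_def tail_integral_def by simp
  with ex1_bij_betw_UNIV[OF cutoff_bij ex1_acceptance_precision_eq_rate]
  show "\<exists>!tau. -xu < tau \<and> tau < xq \<and> score1 p hq hu xq xu t tau = score2 p hq hu xq xu t tau"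
    by (metis greaterThanLessThan_iff)
qed

end
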